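(* Let $P$ be a continuous $L$-ordered set. Then ${\rm pt}_L\sigma_L(P)$, with its spectral $L$-topology, is a locally super-compact $L$-sober space.
   Context: $L$ is a frame with implication $\to$. $L$-subsets: maps to $L$; nonempty: $\bigvee A=1$; ${\rm sub}_X(A,B)=\bigwedge_xA(x)\to B(x)$. $L$-topology: $\mathcal O(X)\subseteq L^X$ closed under finite meets and arbitrary joins containing all constants $a_X$; interior $A^\circ$ = join of open sets below $A$. Super-compact: nonempty $A$ with ${\rm sub}_X(A,\bigvee_iV_i)=\bigvee_i{\rm sub}_X(A,V_i)$ for all families of open $V_i$; ${\rm SC}(X)$ their set. Locally super-compact: each open $A=\bigvee_{B\in{\rm SC}(X)}{\rm sub}_X(B,A)\wedge B^\circ$. A point of $\mathcal O(X)$: $p:\mathcal O(X)\to L$ preserving binary meets and arbitrary joins with $p(\lambda_X)=\lambda$; $[x](A)=A(x)$; $L$-sober: $x\mapsto[x]$ bijective onto the points. ${\rm pt}_L\mathcal O(X)$: the set of points with spectral $L$-topology $\{\phi(A):A\in\mathcal O(X)\}$, $\phi(A)(p)=p(A)$. $L$-order $e$ on $P$: $e(x,x)=1$, $e(x,y)\wedge e(y,z)\le e(x,z)$, $e(x,y)\wedge e(y,x)=1\Rightarrow x=y$. ${\downarrow}y(x)=e(x,y)$; $\sqcup A=x$ iff $e(x,y)={\rm sub}_P(A,{\downarrow}y)$ for all $y$; directed: nonempty and $D(x)\wedge D(y)\le\bigvee_zD(z)\wedge e(x,z)\wedge e(y,z)$; ideal: directed lower set; ${\Downarrow}x(y)=\bigwedge\{e(x,\sqcup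 I)\to I(y):I\text{ ideal with a supremum}\}$; continuous $L$-ordered set: each ${\Downarrow}x$ directed with supremum $x$ (not necessarily an $L$-dcpo). $\sigma_L(P)$: upper sets $A$ with $A(\sqcup D)=\bigvee_xA(x)\wedge D(x)$ for every directed $D$ having a supremum. *)

theory Defs
  imports Main
begin

unbundle lattice_syntax

class frame = complete_lattice +
  assumes inf_Sup_frame: "a \<sqinter> Sup S = (SUP b\<in>S. a \<sqinter> b)"

definition limp :: "'l::frame \<Rightarrow> 'l \<Rightarrow> 'l" where
  "limp a b = Sup {c. c \<sqinter> a \<le> b}"

section \<open>L-subsets of a carrier X (functions, equal to bot outside X)\<close>

definition Lext :: "'x set \<Rightarrow> ('x \<Rightarrow> 'l::frame) \<Rightarrow> bool" where
  "Lext X A \<longleftrightarrow> (\<forall>x. x \<notin> X \<longrightarrow> A x = bot)"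

definition constL :: "'x set \<Rightarrow> 'l::frame \<Rightarrow> 'x \<Rightarrow> 'l" where
  "constL X a = (\<lambda>x. if x \<in> X then a else bot)"

definition Lnonempty :: "'x set \<Rightarrow> ('x \<Rightarrow> 'l::frame) \<Rightarrow> bool" where
  "Lnonempty X A \<longleftrightarrow> (SUP x\<in>X. A x) = top"

definition subL :: "'x set \<Rightarrow> ('x \<Rightarrow> 'l::frame) \<Rightarrow> ('x \<Rightarrow> 'l) \<Rightarrow> 'l" where
  "subL X A B = (INF x\<in>X. limp (A x) (B x))"

definition Ltopology :: "'x set \<Rightarrow> ('x \<Rightarrow> 'l::frame) set \<Rightarrow> bool" where
  "Ltopology X T \<longleftrightarrow>
     (\<forall>A\<in>T. Lext X A) \<and>
     (\<forall>a. constL X a \<in> T) \<and>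
     (\<forall>A\<in>T. \<forall>B\<in>T. inf A B \<in> T) \<and>
     (\<forall>S. S \<subseteq> T \<longrightarrow> Sup S \<in> T)"

definition Linterior :: "'x set \<Rightarrow> ('x \<Rightarrow> 'l::frame) set \<Rightarrow> ('x \<Rightarrow> 'l) \<Rightarrow> 'x \<Rightarrow> 'l" where
  "Linterior X T A = Sup {U \<in> T. \<forall>x\<in>X. U x \<le> A x}"

definition superCompact :: "'x set \<Rightarrow> ('x \<Rightarrow> 'l::frame) set \<Rightarrow> ('x \<Rightarrow> 'l) \<Rightarrow> bool" where
  "superCompact X T A \<longleftrightarrow> Lext X A \<and> Lnonempty X A \<and>
     (\<forall>V. V \<subseteq> T \<longrightarrow> subL X A (Sup V) = (SUP U\<in>V. subL X A U))"

definition SC :: "'x set \<Rightarrow> ('x \<Rightarrow> 'l::frame) set \<Rightarrow> ('x \<Rightarrow> 'l) set" where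
  "SC X T = {A. superCompact X T A}"

definition locallySuperCompact :: "'x set \<Rightarrow> ('x \<Rightarrow> 'l::frame) set \<Rightarrow> bool" where
  "locallySuperCompact X T \<longleftrightarrow>
     (\<forall>A\<in>T. A = (SUP B\<in>SC X T. (\<lambda>x. subL X B A \<sqinter> Linterior X T B x)))"

text \<open>A point is a map T(X) -> L, represented as a function that is bot off T(X).\<close>
definition isPoint :: "'x set \<Rightarrow> ('x \<Rightarrow> 'l::frame) set \<Rightarrow> (('x \<Rightarrow> 'l) \<Rightarrow> 'l) \<Rightarrow> bool" where
  "isPoint X T p \<longleftrightarrow>
     (\<forall>A. A \<notin> T \<longrightarrow> p A = bot) \<and>
     (\<forall>A\<in>T. \<forall>B\<in>T. p (inf A B) = p A \<sqinter> p B) \<and>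
     (\<forall>S. S \<subseteq> T \<longrightarrow> p (Sup S) = (SUP A\<in>S. p A)) \<and>
     (\<forall>a. p (constL X a) = a)"

definition evalPt :: "'x set \<Rightarrow> ('x \<Rightarrow> 'l::frame) set \<Rightarrow> 'x \<Rightarrow> (('x \<Rightarrow> 'l) \<Rightarrow> 'l)" where
  "evalPt X T x = (\<lambda>A. if A \<in> T then A x else bot)"

definition Lsober :: "'x set \<Rightarrow> ('x \<Rightarrow> 'l::frame) set \<Rightarrow> bool" where
  "Lsober X T \<longleftrightarrow> bij_betw (evalPt X T) X {p. isPoint X T p}"

definition ptL :: "'x set \<Rightarrow> ('x \<Rightarrow> 'l::frame) set \<Rightarrow> (('x \<Rightarrow> 'l) \<Rightarrow> 'l) set" where
  "ptL X T = {p. isPoint X T p}"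

definition phiL :: "'x set \<Rightarrow> ('x \<Rightarrow> 'l::frame) set \<Rightarrow> ('x \<Rightarrow> 'l) \<Rightarrow> (('x \<Rightarrow> 'l) \<Rightarrow> 'l) \<Rightarrow> 'l" where
  "phiL X T A = (\<lambda>p. if isPoint X T p then p A else bot)"

definition spectralTop :: "'x set \<Rightarrow> ('x \<Rightarrow> 'l::frame) set \<Rightarrow> ((('x \<Rightarrow> 'l) \<Rightarrow> 'l) \<Rightarrow> 'l) set" where
  "spectralTop X T = {phiL X T A | A. A \<in> T}"

section \<open>L-ordered sets (carrier = the whole type 'a)\<close>

definition Lorder :: "('a \<Rightarrow> 'a \<Rightarrow> 'l::frame) \<Rightarrow> bool" where
  "Lorder e \<longleftrightarrow> (\<forall>x. e x x = top) \<and> (\<forall>x y z. e x y \<sqinter> e y z \<le> e x z) \<and>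
     (\<forall>x y. e x y \<sqinter> e y x = top \<longrightarrow> x = y)"

definition downL :: "('a \<Rightarrow> 'a \<Rightarrow> 'l::frame) \<Rightarrow> 'a \<Rightarrow> 'a \<Rightarrow> 'l" where
  "downL e y = (\<lambda>x. e x y)"

definition isSupL :: "('a \<Rightarrow> 'a \<Rightarrow> 'l::frame) \<Rightarrow> ('a \<Rightarrow> 'l) \<Rightarrow> 'a \<Rightarrow> bool" where
  "isSupL e A x \<longleftrightarrow> (\<forall>y. e x y = subL UNIV A (downL e y))"

definition directedL :: "('a \<Rightarrow> 'a \<Rightarrow> 'l::frame) \<Rightarrow> ('a \<Rightarrow> 'l) \<Rightarrow> bool" where
  "directedL e D \<longleftrightarrow> Lnonempty UNIV D \<and>
     (\<forall>x y. D x \<sqinter> D y \<le> (SUP z. D z \<sqinter> e x z \<sqinter> e y z))"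

definition lowerL :: "('a \<Rightarrow> 'a \<Rightarrow> 'l::frame) \<Rightarrow> ('a \<Rightarrow> 'l) \<Rightarrow> bool" where
  "lowerL e A \<longleftrightarrow> (\<forall>x y. A x \<sqinter> e y x \<le> A y)"

definition upperL :: "('a \<Rightarrow> 'a \<Rightarrow> 'l::frame) \<Rightarrow> ('a \<Rightarrow> 'l) \<Rightarrow> bool" where
  "upperL e A \<longleftrightarrow> (\<forall>x y. A x \<sqinter> e x y \<le> A y)"

definition idealL :: "('a \<Rightarrow> 'a \<Rightarrow> 'l::frame) \<Rightarrow> ('a \<Rightarrow> 'l) \<Rightarrow> bool" where
  "idealL e I \<longleftrightarrow> directedL e I \<and> lowerL e I"

definition wayBelowL :: "('a \<Rightarrow> 'a \<Rightarrow> 'l::frame) \<Rightarrow> 'a \<Rightarrow> 'a \<Rightarrow> 'l" where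
  "wayBelowL e x = (\<lambda>y. INF Is\<in>{(I, s). idealL e I \<and> isSupL e I s}.
                          limp (e x (snd Is)) (fst Is y))"

definition continuousLOrd :: "('a \<Rightarrow> 'a \<Rightarrow> 'l::frame) \<Rightarrow> bool" where
  "continuousLOrd e \<longleftrightarrow> Lorder e \<and>
     (\<forall>x. directedL e (wayBelowL e x) \<and> isSupL e (wayBelowL e x) x)"

definition sigmaL :: "('a \<Rightarrow> 'a \<Rightarrow> 'l::frame) \<Rightarrow> ('a \<Rightarrow> 'l) set" where
  "sigmaL e = {A. upperL e A \<and>
     (\<forall>D s. directedL e D \<and> isSupL e D s \<longrightarrow> A s = (SUP x. A x \<sqinter> D x))}"

end

(*
  For a continuous L-ordered set P, interpolation makes every way-above set of x (the degree to
  which x is way below y, as a function of y) Scott open, and every Scott open A is the join over x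
  of A(x) /\ way-above(x).
  A way-above set lies below the specialization up-set of x, so its image under phi lies in the
  interior of the specialization up-set of the point [x] of the spectrum.  In any L-topological
  space the specialization up-set of a point q is super-compact with sub(up q, U) = U(q); hence the
  spectrum is locally super-compact.  That the spectrum of an L-topology is an L-sober
  L-topological space holds in general.
*)
theory Submission
  imports Defs
begin

unbundle lattice_syntax

section \<open>Implication in a frame\<close>

lemma le_limp_iff: "(c::'l::frame) \<le> limp a b \<longleftrightarrow> c \<sqinter> a \<le> b"
proof
  assume "c \<le> limp a b"
  hence "c \<sqinter> a \<le> a \<sqinter> limp a b" by (simp add: le_infI2 inf_commute)
  also have "\<dots> = (SUP c\<in>{c. c \<sqinter> a \<le> b}. a \<sqinter> c)" unfolding limp_def by (rule inf_Sup_frame)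
  also have "\<dots> \<le> b" by (auto intro: SUP_least simp: inf_commute)
  finally show "c \<sqinter> a \<le> b" .
next
  assume "c \<sqinter> a \<le> b"
  thus "c \<le> limp a b" unfolding limp_def by (auto intro: Sup_upper)
qed

lemma limp_inf_le: "limp a b \<sqinter> (a::'l::frame) \<le> b"
  using le_limp_iff by blast

lemma limp_top_left: "limp top (b::'l::frame) = b"
  by (metis antisym inf_top.right_neutral le_limp_iff order_refl)

lemma limp_refl: "limp (a::'l::frame) a = top"
  by (rule top_le) (simp add: le_limp_iff)

lemma inf_SUP_frame: "(a::'l::frame) \<sqinter> (SUP i\<in>I. f i) = (SUP i\<in>I. a \<sqinter> f i)"
  using inf_Sup_frame[of a "f ` I"] by (simp add: image_image)

lemma SUP_inf_frame: "(SUP i\<in>I. f i) \<sqinter> (a::'l::frame) = (SUP i\<in>I. f i \<sqinter> a)"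
  using inf_SUP_frame[of a f I] by (simp add: inf_commute)

lemma SUP_inf_SUP_frame:
  "(SUP i\<in>I. f i) \<sqinter> (SUP j\<in>J. g j) = (SUP i\<in>I. SUP j\<in>J. f i \<sqinter> (g j :: 'l::frame))"
  unfolding SUP_inf_frame by (simp only: inf_SUP_frame)

section \<open>L-topological spaces and specialization up-sets\<close>

lemma Ltopology_constL: "Ltopology X T \<Longrightarrow> constL X a \<in> T"
  and Ltopology_inf: "Ltopology X T \<Longrightarrow> A \<in> T \<Longrightarrow> B \<in> T \<Longrightarrow> A \<sqinter> B \<in> T"
  and Ltopology_Sup: "Ltopology X T \<Longrightarrow> S \<subseteq> T \<Longrightarrow> Sup S \<in> T"
  unfolding Ltopology_def by blast+

lemma Ltopology_outside: "Ltopology X T \<Longrightarrow> A \<in> T \<Longrightarrow> y \<notin> X \<Longrightarrow> A y = bot"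
  unfolding Ltopology_def Lext_def by blast

lemma Linterior_le: "y \<in> X \<Longrightarrow> Linterior X T B y \<le> B y"
  unfolding Linterior_def by (auto intro: SUP_least)

lemma Linterior_upper: "U \<in> T \<Longrightarrow> \<forall>y\<in>X. U y \<le> B y \<Longrightarrow> U z \<le> Linterior X T B z"
  unfolding Linterior_def by (auto intro: SUP_upper2)

lemma Linterior_outside:
  "Ltopology X T \<Longrightarrow> y \<notin> X \<Longrightarrow> Linterior X T B y = bot"
  unfolding Linterior_def by (auto simp: Ltopology_outside)

definition specUp :: "'x set \<Rightarrow> ('x \<Rightarrow> 'l::frame) set \<Rightarrow> 'x \<Rightarrow> 'x \<Rightarrow> 'l" where
  "specUp X T x = (\<lambda>y. if y \<in> X then INF C\<in>T. limp (C x) (C y) else bot)"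

lemma specUp_refl: "x \<in> X \<Longrightarrow> specUp X T x x = top"
  unfolding specUp_def by (simp add: limp_refl)

lemma specUp_inf_le: "C x \<sqinter> specUp X T x y \<le> C y" if "C \<in> T"
proof (cases "y \<in> X")
  case True
  hence "specUp X T x y \<le> limp (C x) (C y)"
    using that unfolding specUp_def by (auto intro: INF_lower)
  thus ?thesis by (simp add: le_limp_iff inf_commute)
qed (simp add: specUp_def)

lemma le_specUpI:
  "y \<in> X \<Longrightarrow> (\<And>C. C \<in> T \<Longrightarrow> c \<sqinter> C x \<le> C y) \<Longrightarrow> c \<le> specUp X T x y"
  unfolding specUp_def by (simp add: le_INF_iff le_limp_iff)

lemma subL_specUp:
  assumes "x \<in> X" and "U \<in> T"
  shows "subL X (specUp X T x) U = U x"
proof (rule antisym)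
  have "subL X (specUp X T x) U \<le> limp (specUp X T x x) (U x)"
    unfolding subL_def using assms(1) by (rule INF_lower)
  thus "subL X (specUp X T x) U \<le> U x"
    using assms(1) by (simp add: specUp_refl limp_top_left)
  show "U x \<le> subL X (specUp X T x) U"
    unfolding subL_def using specUp_inf_le[OF assms(2)]
    by (auto intro!: INF_greatest simp: le_limp_iff)
qed

lemma superCompact_specUp:
  assumes T: "Ltopology X T" and x: "x \<in> X"
  shows "specUp X T x \<in> SC X T"
  unfolding SC_def superCompact_def
proof (intro CollectI conjI allI impI)
  show "Lext X (specUp X T x)" unfolding Lext_def specUp_def by simp
  show "Lnonempty X (specUp X T x)" unfolding Lnonempty_def
    using x by (metis SUP_upper specUp_refl top_le)
  fix V assume V: "V \<subseteq> T"
  hence "Sup V \<in> T" by (rule Ltopology_Sup[OF T])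
  hence "subL X (specUp X T x) (Sup V) = (SUP U\<in>V. U x)"
    using x by (simp add: subL_specUp)
  also have "\<dots> = (SUP U\<in>V. subL X (specUp X T x) U)"
    using V x by (intro SUP_cong) (auto simp: subL_specUp)
  finally show "subL X (specUp X T x) (Sup V) = (SUP U\<in>V. subL X (specUp X T x) U)" .
qed

lemma locallySuperCompactI_specUp:
  assumes T: "Ltopology X T"
    and covered: "\<And>A y. A \<in> T \<Longrightarrow> y \<in> X \<Longrightarrow>
                    A y \<le> (SUP x\<in>X. A x \<sqinter> Linterior X T (specUp X T x) y)"
  shows "locallySuperCompact X T"
  unfolding locallySuperCompact_def
proof (intro ballI ext)
  fix A y assume A: "A \<in> T"
  have "(SUP B\<in>SC X T. (\<lambda>x. subL X B A \<sqinter> Linterior X T B x)) y =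
        (SUP B\<in>SC X T. subL X B A \<sqinter> Linterior X T B y)" by (simp add: image_image)
  also have "\<dots> = A y"
  proof (cases "y \<in> X")
    case False
    thus ?thesis using A T by (simp add: Linterior_outside Ltopology_outside)
  next
    case y: True
    show ?thesis
    proof (rule antisym)
      have "A y \<le> (SUP x\<in>X. subL X (specUp X T x) A \<sqinter> Linterior X T (specUp X T x) y)"
        using covered[OF A y] A by (simp add: subL_specUp cong: SUP_cong)
      also have "\<dots> \<le> (SUP B\<in>SC X T. subL X B A \<sqinter> Linterior X T B y)"
        using superCompact_specUp[OF T] by (auto intro!: SUP_least SUP_upper)
      finally show "A y \<le> (SUP B\<in>SC X T. subL X B A \<sqinter> Linterior X T B y)" .
      have "subL X B A \<sqinter> Linterior X T B y \<le> A y" for B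
      proof -
        have "subL X B A \<le> limp (B y) (A y)" unfolding subL_def using y by (rule INF_lower)
        thus ?thesis using Linterior_le[OF y, of T B] limp_inf_le
          by (meson inf_mono order_trans)
      qed
      thus "(SUP B\<in>SC X T. subL X B A \<sqinter> Linterior X T B y) \<le> A y"
        by (simp add: SUP_least)
    qed
  qed
  finally show "A y = (SUP B\<in>SC X T. (\<lambda>x. subL X B A \<sqinter> Linterior X T B x)) y" ..
qed

section \<open>The spectrum of an L-topology\<close>

lemma isPoint_inf: "isPoint X T p \<Longrightarrow> A \<in> T \<Longrightarrow> B \<in> T \<Longrightarrow> p (A \<sqinter> B) = p A \<sqinter> p B"
  and isPoint_Sup: "isPoint X T p \<Longrightarrow> S \<subseteq> T \<Longrightarrow> p (Sup S) = (SUP A\<in>S. p A)"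
  and isPoint_constL: "isPoint X T p \<Longrightarrow> p (constL X a) = a"
  and isPoint_outside: "isPoint X T p \<Longrightarrow> A \<notin> T \<Longrightarrow> p A = bot"
  unfolding isPoint_def by blast+

lemma mem_ptL: "p \<in> ptL X T \<longleftrightarrow> isPoint X T p"
  unfolding ptL_def by simp

lemma isPoint_mono: "isPoint X T p \<Longrightarrow> A \<in> T \<Longrightarrow> B \<in> T \<Longrightarrow> A \<le> B \<Longrightarrow> p A \<le> p B"
proof -
  assume p: "isPoint X T p" and A: "A \<in> T" and B: "B \<in> T" and "A \<le> B"
  hence "p A = p (A \<sqinter> B)" by (simp add: inf.absorb1)
  also have "\<dots> = p A \<sqinter> p B" by (rule isPoint_inf[OF p A B])
  finally show "p A \<le> p B" by (rule inf.orderI)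
qed

lemma isPoint_evalPt:
  assumes T: "Ltopology X T" and x: "x \<in> X"
  shows "isPoint X T (evalPt X T x)"
  unfolding isPoint_def
proof (intro conjI allI ballI impI)
  fix S assume S: "S \<subseteq> T"
  have "(SUP A\<in>S. evalPt X T x A) = (SUP A\<in>S. A x)"
    using S by (intro SUP_cong) (auto simp: evalPt_def)
  thus "evalPt X T x (Sup S) = (SUP A\<in>S. evalPt X T x A)"
    using Ltopology_Sup[OF T S] by (simp add: evalPt_def)
next
  fix a show "evalPt X T x (constL X a) = a"
    using Ltopology_constL[OF T] x by (simp add: evalPt_def constL_def)
qed (auto simp: evalPt_def Ltopology_inf[OF T])

lemma phiL_point: "isPoint X T p \<Longrightarrow> phiL X T A p = p A"
  unfolding phiL_def by simp

lemma phiL_inf: "A \<in> T \<Longrightarrow> B \<in> T \<Longrightarrow> phiL X T (A \<sqinter> B) = phiL X T A \<sqinter> phiL X T B"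
  by (rule ext) (simp add: phiL_def isPoint_inf)

lemma phiL_Sup: "S \<subseteq> T \<Longrightarrow> phiL X T (Sup S) = Sup (phiL X T ` S)"
  by (rule ext) (simp add: phiL_def isPoint_Sup image_image)

lemma phiL_constL: "phiL X T (constL X a) = constL (ptL X T) a"
proof (rule ext)
  fix p show "phiL X T (constL X a) p = constL (ptL X T) a p"
    by (cases "isPoint X T p")
      (simp_all add: phiL_def isPoint_constL constL_def[of "ptL X T"] mem_ptL)
qed

lemma phiL_spectralTop: "A \<in> T \<Longrightarrow> phiL X T A \<in> spectralTop X T"
  unfolding spectralTop_def by blast

lemma Ltopology_spectrum:
  assumes T: "Ltopology X T"
  shows "Ltopology (ptL X T) (spectralTop X T)"
  unfolding Ltopology_def
proof (intro conjI ballI allI impI)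
  fix U assume "U \<in> spectralTop X T"
  thus "Lext (ptL X T) U" unfolding spectralTop_def Lext_def mem_ptL phiL_def by auto
next
  fix a show "constL (ptL X T) a \<in> spectralTop X T"
    unfolding spectralTop_def using Ltopology_constL[OF T] phiL_constL[of X T a, symmetric] by blast
next
  fix U V assume "U \<in> spectralTop X T" "V \<in> spectralTop X T"
  then obtain A B where "A \<in> T" "B \<in> T" "U = phiL X T A" "V = phiL X T B"
    unfolding spectralTop_def by blast
  hence "U \<sqinter> V = phiL X T (A \<sqinter> B)" by (simp add: phiL_inf)
  thus "U \<sqinter> V \<in> spectralTop X T"
    using Ltopology_inf[OF T \<open>A \<in> T\<close> \<open>B \<in> T\<close>] by (simp add: phiL_spectralTop)
next
  fix S assume "S \<subseteq> spectralTop X T"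
  hence "S = phiL X T ` {A \<in> T. phiL X T A \<in> S}" unfolding spectralTop_def by blast
  hence "Sup S = phiL X T (Sup {A \<in> T. phiL X T A \<in> S})" by (simp add: phiL_Sup)
  thus "Sup S \<in> spectralTop X T" using Ltopology_Sup[OF T] by (simp add: phiL_spectralTop)
qed

lemma isPoint_spectral_point:
  assumes T: "Ltopology X T" and q: "isPoint (ptL X T) (spectralTop X T) q"
  shows "isPoint X T (\<lambda>A. if A \<in> T then q (phiL X T A) else bot)"
  unfolding isPoint_def
proof (intro conjI ballI allI impI)
  fix A B assume "A \<in> T" "B \<in> T"
  thus "(if A \<sqinter> B \<in> T then q (phiL X T (A \<sqinter> B)) else bot) =
        (if A \<in> T then q (phiL X T A) else bot) \<sqinter> (if B \<in> T then q (phiL X T B) else bot)"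
    using Ltopology_inf[OF T] isPoint_inf[OF q] by (simp add: phiL_inf phiL_spectralTop)
next
  fix S assume S: "S \<subseteq> T"
  hence "phiL X T ` S \<subseteq> spectralTop X T" by (auto simp: phiL_spectralTop)
  hence "q (phiL X T (Sup S)) = (SUP A\<in>S. q (phiL X T A))"
    using q S by (simp add: phiL_Sup isPoint_Sup image_image)
  moreover have "(SUP A\<in>S. if A \<in> T then q (phiL X T A) else bot) = (SUP A\<in>S. q (phiL X T A))"
    using S by (intro SUP_cong) auto
  moreover have "Sup S \<in> T" using Ltopology_Sup[OF T S] .
  ultimately show "(if Sup S \<in> T then q (phiL X T (Sup S)) else bot) =
                   (SUP A\<in>S. if A \<in> T then q (phiL X T A) else bot)"
    by simp
next
  fix a show "(if constL X a \<in> T then q (phiL X T (constL X a)) else bot) = a"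
    using Ltopology_constL[OF T] isPoint_constL[OF q] by (simp add: phiL_constL)
qed simp

lemma Lsober_spectrum:
  assumes T: "Ltopology X T"
  shows "Lsober (ptL X T) (spectralTop X T)"
  unfolding Lsober_def bij_betw_def
proof
  have eval: "evalPt (ptL X T) (spectralTop X T) p (phiL X T A) = p A"
    if "p \<in> ptL X T" "A \<in> T" for p A
    using that by (simp add: evalPt_def phiL_spectralTop phiL_point mem_ptL)
  show "inj_on (evalPt (ptL X T) (spectralTop X T)) (ptL X T)"
  proof (rule inj_onI, rule ext)
    fix p p' A
    assume p: "p \<in> ptL X T" "p' \<in> ptL X T"
      and eq: "evalPt (ptL X T) (spectralTop X T) p = evalPt (ptL X T) (spectralTop X T) p'"
    show "p A = p' A"
    proof (cases "A \<in> T")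
      case True
      thus ?thesis using eq eval[OF p(1) True] eval[OF p(2) True] by metis
    qed (use p in \<open>simp add: mem_ptL isPoint_outside\<close>)
  qed
  show "evalPt (ptL X T) (spectralTop X T) ` ptL X T = {q. isPoint (ptL X T) (spectralTop X T) q}"
  proof (intro equalityI subsetI)
    fix q assume "q \<in> evalPt (ptL X T) (spectralTop X T) ` ptL X T"
    thus "q \<in> {q. isPoint (ptL X T) (spectralTop X T) q}"
      using isPoint_evalPt[OF Ltopology_spectrum[OF T]] by blast
  next
    fix q assume "q \<in> {q. isPoint (ptL X T) (spectralTop X T) q}"
    hence q: "isPoint (ptL X T) (spectralTop X T) q" by simp
    define p where "p = (\<lambda>A. if A \<in> T then q (phiL X T A) else bot)"
    have p_pt: "p \<in> ptL X T" unfolding p_def mem_ptL using isPoint_spectral_point[OF T q] by simp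
    have "evalPt (ptL X T) (spectralTop X T) p = q"
    proof
      fix U show "evalPt (ptL X T) (spectralTop X T) p U = q U"
      proof (cases "U \<in> spectralTop X T")
        case True
        then obtain A where "A \<in> T" "U = phiL X T A" unfolding spectralTop_def by blast
        thus ?thesis using eval[OF p_pt] by (simp add: p_def)
      qed (use q in \<open>simp add: evalPt_def isPoint_outside\<close>)
    qed
    thus "q \<in> evalPt (ptL X T) (spectralTop X T) ` ptL X T" using p_pt by blast
  qed
qed

lemma isPoint_le_specUp_evalPt:
  assumes T: "Ltopology X T" and x: "x \<in> X"
    and B: "B \<in> T" "\<And>y. y \<in> X \<Longrightarrow> B y \<le> specUp X T x y"
    and p: "isPoint X T p"
  shows "p B \<le> specUp (ptL X T) (spectralTop X T) (evalPt X T x) p"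
proof (rule le_specUpI)
  show "p \<in> ptL X T" using p by (simp add: mem_ptL)
  fix U assume "U \<in> spectralTop X T"
  then obtain C where C: "C \<in> T" "U = phiL X T C" unfolding spectralTop_def by blast
  have "B \<sqinter> constL X (C x) \<le> C"
  proof (rule le_funI)
    fix y show "(B \<sqinter> constL X (C x)) y \<le> C y"
    proof (cases "y \<in> X")
      case True
      hence "B y \<sqinter> C x \<le> C x \<sqinter> specUp X T x y" using B(2) by (simp add: inf_commute le_infI1)
      also have "\<dots> \<le> C y" using C(1) by (rule specUp_inf_le)
      finally show ?thesis using True by (simp add: constL_def)
    qed (simp add: constL_def)
  qed
  hence "p (B \<sqinter> constL X (C x)) \<le> p C"
    using T B(1) C(1) by (intro isPoint_mono[OF p] Ltopology_inf Ltopology_constL)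
  moreover have "p (B \<sqinter> constL X (C x)) = p B \<sqinter> C x"
    using T B(1) by (simp add: isPoint_inf[OF p] isPoint_constL[OF p] Ltopology_constL)
  moreover have "U (evalPt X T x) = C x"
    using C isPoint_evalPt[OF T x] by (simp add: phiL_point evalPt_def)
  ultimately show "p B \<sqinter> U (evalPt X T x) \<le> U p" using C p by (simp add: phiL_point)
qed

lemma locallySuperCompact_spectrum:
  assumes T: "Ltopology X T"
    and W: "\<And>x. x \<in> X \<Longrightarrow> W x \<in> T" "\<And>x y. x \<in> X \<Longrightarrow> y \<in> X \<Longrightarrow> W x y \<le> specUp X T x y"
    and decomp: "\<And>A. A \<in> T \<Longrightarrow> A = (SUP x\<in>X. W x \<sqinter> constL X (A x))"
  shows "locallySuperCompact (ptL X T) (spectralTop X T)"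
proof (rule locallySuperCompactI_specUp[OF Ltopology_spectrum[OF T]])
  fix U p assume "U \<in> spectralTop X T" and "p \<in> ptL X T"
  then obtain A where A: "A \<in> T" "U = phiL X T A" and p: "isPoint X T p"
    unfolding spectralTop_def mem_ptL by blast
  let ?int = "\<lambda>q. Linterior (ptL X T) (spectralTop X T) (specUp (ptL X T) (spectralTop X T) q) p"
  have "U p = p (SUP x\<in>X. W x \<sqinter> constL X (A x))"
    using A p decomp by (simp add: phiL_point)
  also have "\<dots> = (SUP x\<in>X. p (W x \<sqinter> constL X (A x)))"
  proof -
    have "(\<lambda>x. W x \<sqinter> constL X (A x)) ` X \<subseteq> T"
      using T W(1) by (auto intro: Ltopology_inf Ltopology_constL)
    from isPoint_Sup[OF p this] show ?thesis by (simp add: image_image)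
  qed
  also have "\<dots> = (SUP x\<in>X. p (W x) \<sqinter> A x)"
    using T W(1) by (simp add: isPoint_inf[OF p] isPoint_constL[OF p] Ltopology_constL)
  also have "\<dots> \<le> (SUP q\<in>ptL X T. U q \<sqinter> ?int q)"
  proof (rule SUP_least)
    fix x assume x: "x \<in> X"
    have pt: "evalPt X T x \<in> ptL X T" using isPoint_evalPt[OF T x] by (simp add: mem_ptL)
    have "p (W x) = phiL X T (W x) p" using p by (simp add: phiL_point)
    also have "\<dots> \<le> ?int (evalPt X T x)"
      using isPoint_le_specUp_evalPt[OF T x W(1)[OF x] W(2)[OF x]]
      by (intro Linterior_upper) (auto simp: phiL_spectralTop[OF W(1)[OF x]] mem_ptL phiL_point)
    finally have "p (W x) \<le> ?int (evalPt X T x)" .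
    moreover have "U (evalPt X T x) = A x"
      using A isPoint_evalPt[OF T x] by (simp add: phiL_point evalPt_def)
    ultimately have "p (W x) \<sqinter> A x \<le> U (evalPt X T x) \<sqinter> ?int (evalPt X T x)"
      by (simp add: inf_commute le_infI2)
    thus "p (W x) \<sqinter> A x \<le> (SUP q\<in>ptL X T. U q \<sqinter> ?int q)"
      using pt by (blast intro: SUP_upper2)
  qed
  finally show "U p \<le> (SUP q\<in>ptL X T. U q \<sqinter> ?int q)" .
qed

section \<open>The Scott L-topology\<close>

lemma isSupL_iff_le:
  fixes e :: "'a \<Rightarrow> 'a \<Rightarrow> 'l::frame"
  shows "isSupL e D s \<longleftrightarrow> (\<forall>y c. c \<le> e s y \<longleftrightarrow> (\<forall>d. c \<sqinter> D d \<le> e d y))"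
proof -
  have "c \<le> subL UNIV D (downL e y) \<longleftrightarrow> (\<forall>d. c \<sqinter> D d \<le> e d y)" for c y
    by (simp add: subL_def downL_def le_INF_iff le_limp_iff)
  moreover have "a = b \<longleftrightarrow> (\<forall>c. c \<le> a \<longleftrightarrow> c \<le> b)" for a b :: 'l
    by (meson order.antisym order.refl)
  ultimately show ?thesis unfolding isSupL_def by presburger
qed

lemma directedL_SUP_top: "directedL e D \<Longrightarrow> (SUP x. D x) = top"
  unfolding directedL_def Lnonempty_def by simp

lemma directedL_inf_le:
  assumes "directedL e D" and "\<And>z. D z \<sqinter> e x z \<sqinter> e y z \<sqinter> c \<le> b"
  shows "D x \<sqinter> D y \<sqinter> c \<le> b"
proof -
  have "D x \<sqinter> D y \<sqinter> c \<le> (SUP z. D z \<sqinter> e x z \<sqinter> e y z) \<sqinter> c"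
    using assms(1) unfolding directedL_def by (blast intro: inf_mono)
  also have "\<dots> = (SUP z. D z \<sqinter> e x z \<sqinter> e y z \<sqinter> c)" by (rule SUP_inf_frame)
  also have "\<dots> \<le> b" by (rule SUP_least) (rule assms(2))
  finally show ?thesis .
qed

lemma sigmaL_upper: "A \<in> sigmaL e \<Longrightarrow> A x \<sqinter> e x y \<le> A y"
  unfolding sigmaL_def upperL_def by blast

lemma sigmaL_SUP: "A \<in> sigmaL e \<Longrightarrow> directedL e D \<Longrightarrow> isSupL e D s \<Longrightarrow> A s = (SUP x. A x \<sqinter> D x)"
  unfolding sigmaL_def by blast

lemma sigmaL_inf_le: "A \<in> sigmaL e \<Longrightarrow> directedL e D \<Longrightarrow> isSupL e D s \<Longrightarrow> A x \<sqinter> D x \<le> A s"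
proof -
  assume "A \<in> sigmaL e" "directedL e D" "isSupL e D s"
  moreover have "A x \<sqinter> D x \<le> (SUP x. A x \<sqinter> D x)" by (rule SUP_upper) simp
  ultimately show ?thesis by (simp add: sigmaL_SUP)
qed

lemma const_sigmaL: "(\<lambda>x. a) \<in> sigmaL e"
proof -
  have "a = (SUP x. a \<sqinter> D x)" if "directedL e D" for D
    using inf_SUP_frame[of a D UNIV] directedL_SUP_top[OF that] by simp
  thus ?thesis unfolding sigmaL_def upperL_def by simp
qed

lemma inf_sigmaL_le_SUP:
  assumes A: "A \<in> sigmaL e" and B: "B \<in> sigmaL e"
    and D: "directedL e D" "isSupL e D s"
  shows "(A \<sqinter> B) s \<le> (SUP z. (A \<sqinter> B) z \<sqinter> D z)" (is "_ \<le> ?R")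
proof -
  have "(A \<sqinter> B) s = (SUP x. SUP y. A x \<sqinter> D x \<sqinter> (B y \<sqinter> D y))"
    using sigmaL_SUP[OF A D] sigmaL_SUP[OF B D] by (simp add: SUP_inf_SUP_frame)
  also have "\<dots> \<le> ?R"
  proof (intro SUP_least)
    fix x y
    have "D x \<sqinter> D y \<sqinter> (A x \<sqinter> B y) \<le> ?R"
    proof (rule directedL_inf_le[OF D(1)])
      fix z
      let ?X = "D z \<sqinter> e x z \<sqinter> e y z \<sqinter> (A x \<sqinter> B y)"
      have "?X \<le> A z"
        by (rule order_trans[OF _ sigmaL_upper[OF A, of x z]]) (simp add: le_infI1 le_infI2)
      moreover have "?X \<le> B z"
        by (rule order_trans[OF _ sigmaL_upper[OF B, of y z]]) (simp add: le_infI1 le_infI2)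
      moreover have "?X \<le> D z" by (simp add: le_infI1)
      ultimately have "?X \<le> (A \<sqinter> B) z \<sqinter> D z" by simp
      thus "?X \<le> ?R" by (rule SUP_upper2[OF UNIV_I])
    qed
    thus "A x \<sqinter> D x \<sqinter> (B y \<sqinter> D y) \<le> ?R" by (simp add: inf_aci)
  qed
  finally show ?thesis .
qed

lemma inf_sigmaL:
  assumes A: "A \<in> sigmaL e" and B: "B \<in> sigmaL e"
  shows "A \<sqinter> B \<in> sigmaL e"
  unfolding sigmaL_def upperL_def
proof (intro CollectI conjI allI impI)
  fix x y
  have "(A \<sqinter> B) x \<sqinter> e x y \<le> A y"
    by (rule order_trans[OF _ sigmaL_upper[OF A, of x]]) (simp add: inf_mono le_infI1)
  moreover have "(A \<sqinter> B) x \<sqinter> e x y \<le> B y"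
    by (rule order_trans[OF _ sigmaL_upper[OF B, of x]]) (simp add: inf_mono le_infI1)
  ultimately show "(A \<sqinter> B) x \<sqinter> e x y \<le> (A \<sqinter> B) y" by simp
next
  fix D s assume "directedL e D \<and> isSupL e D s"
  hence D: "directedL e D" "isSupL e D s" by auto
  show "(A \<sqinter> B) s = (SUP z. (A \<sqinter> B) z \<sqinter> D z)"
  proof (rule antisym[OF inf_sigmaL_le_SUP[OF A B D] SUP_least])
    fix x
    have "(A \<sqinter> B) x \<sqinter> D x \<le> A s"
      by (rule order_trans[OF _ sigmaL_inf_le[OF A D, of x]]) (simp add: inf_mono le_infI1)
    moreover have "(A \<sqinter> B) x \<sqinter> D x \<le> B s"
      by (rule order_trans[OF _ sigmaL_inf_le[OF B D, of x]]) (simp add: inf_mono le_infI1)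
    ultimately show "(A \<sqinter> B) x \<sqinter> D x \<le> (A \<sqinter> B) s" by simp
  qed
qed

lemma Sup_sigmaL:
  assumes S: "S \<subseteq> sigmaL e"
  shows "Sup S \<in> sigmaL e"
  unfolding sigmaL_def upperL_def
proof (intro CollectI conjI allI impI)
  fix x y
  have "Sup S x \<sqinter> e x y = (SUP A\<in>S. A x \<sqinter> e x y)" by (simp add: SUP_inf_frame)
  also have "\<dots> \<le> (SUP A\<in>S. A y)"
    using S by (intro SUP_mono) (auto intro: sigmaL_upper)
  finally show "Sup S x \<sqinter> e x y \<le> Sup S y" by simp
next
  fix D s assume D: "directedL e D \<and> isSupL e D s"
  have "Sup S s = (SUP A\<in>S. SUP x. A x \<sqinter> D x)"
    unfolding Sup_apply using S D by (intro SUP_cong) (auto simp: sigmaL_SUP)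
  also have "\<dots> = (SUP x. SUP A\<in>S. A x \<sqinter> D x)" by (rule SUP_commute)
  also have "\<dots> = (SUP x. Sup S x \<sqinter> D x)" by (simp add: SUP_inf_frame)
  finally show "Sup S s = (SUP x. Sup S x \<sqinter> D x)" .
qed

lemma Ltopology_sigmaL: "Ltopology UNIV (sigmaL e)"
  unfolding Ltopology_def Lext_def constL_def by (simp add: const_sigmaL inf_sigmaL Sup_sigmaL)

section \<open>Way-below and interpolation\<close>

lemma wayBelowL_inf_le:
  assumes "idealL e I" and "isSupL e I s"
  shows "wayBelowL e x y \<sqinter> e x s \<le> I y"
proof -
  have "wayBelowL e x y \<le> limp (e x s) (I y)"
    unfolding wayBelowL_def using assms by (intro INF_lower2[of "(I, s)"]) auto
  thus ?thesis by (simp add: le_limp_iff)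
qed

lemma wayBelowL_greatest:
  assumes "\<And>I s. idealL e I \<Longrightarrow> isSupL e I s \<Longrightarrow> c \<sqinter> e x s \<le> I y"
  shows "c \<le> wayBelowL e x y"
  unfolding wayBelowL_def using assms by (auto intro!: INF_greatest simp: le_limp_iff)

lemma lowerL_wayBelowL: "lowerL e (wayBelowL e x)"
  unfolding lowerL_def
proof (intro allI)
  fix z w
  show "wayBelowL e x z \<sqinter> e w z \<le> wayBelowL e x w"
  proof (rule wayBelowL_greatest)
    fix I s assume I: "idealL e I" "isSupL e I s"
    have "wayBelowL e x z \<sqinter> e w z \<sqinter> e x s = (wayBelowL e x z \<sqinter> e x s) \<sqinter> e w z"
      by (simp add: inf_aci)
    also have "\<dots> \<le> I z \<sqinter> e w z" using wayBelowL_inf_le[OF I] by (rule inf_mono) simp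
    also have "\<dots> \<le> I w" using I(1) unfolding idealL_def lowerL_def by blast
    finally show "wayBelowL e x z \<sqinter> e w z \<sqinter> e x s \<le> I w" .
  qed
qed

definition wayAboveL :: "('a \<Rightarrow> 'a \<Rightarrow> 'l::frame) \<Rightarrow> 'a \<Rightarrow> 'a \<Rightarrow> 'l" where
  "wayAboveL e x = (\<lambda>y. wayBelowL e y x)"

text \<open>For directed D with supremum s, this union of the way-below sets of the elements of D
  is an ideal with supremum s; hence it contains the way-below set of s, which is interpolation.\<close>
definition wayBelowUnion :: "('a \<Rightarrow> 'a \<Rightarrow> 'l::frame) \<Rightarrow> ('a \<Rightarrow> 'l) \<Rightarrow> 'a \<Rightarrow> 'l" where
  "wayBelowUnion e D = (\<lambda>z. SUP d. D d \<sqinter> wayBelowL e d z)"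

lemma le_wayBelowUnion: "D d \<sqinter> wayBelowL e d z \<le> wayBelowUnion e D z"
  unfolding wayBelowUnion_def by (rule SUP_upper) simp

lemma lowerL_wayBelowUnion: "lowerL e (wayBelowUnion e D)"
  unfolding lowerL_def
proof (intro allI)
  fix x y
  have "wayBelowUnion e D x \<sqinter> e y x = (SUP d. D d \<sqinter> wayBelowL e d x \<sqinter> e y x)"
    unfolding wayBelowUnion_def by (rule SUP_inf_frame)
  also have "\<dots> \<le> wayBelowUnion e D y"
  proof (rule SUP_least)
    fix d
    have "D d \<sqinter> wayBelowL e d x \<sqinter> e y x \<le> D d \<sqinter> wayBelowL e d y"
      using lowerL_wayBelowL[of e d] unfolding lowerL_def by (simp add: inf_assoc le_infI2)
    also have "\<dots> \<le> wayBelowUnion e D y" by (rule le_wayBelowUnion)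
    finally show "D d \<sqinter> wayBelowL e d x \<sqinter> e y x \<le> wayBelowUnion e D y" .
  qed
  finally show "wayBelowUnion e D x \<sqinter> e y x \<le> wayBelowUnion e D y" .
qed

locale Lordered =
  fixes e :: "'a \<Rightarrow> 'a \<Rightarrow> 'l::frame"
  assumes Lorder: "Lorder e"
begin

lemma e_refl: "e x x = top"
  using Lorder unfolding Lorder_def by blast

lemma e_trans: "e x y \<sqinter> e y z \<le> e x z"
  using Lorder unfolding Lorder_def by blast

lemma isSupL_upper: "isSupL e D s \<Longrightarrow> D d \<le> e d s"
  using isSupL_iff_le[of e D s] e_refl[of s] by (metis inf_top_left order_refl)

lemma idealL_downL: "idealL e (downL e y)"
  unfolding idealL_def directedL_def lowerL_def Lnonempty_def downL_def
proof (intro conjI allI)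
  show "(SUP x. e x y) = top" by (metis SUP_upper UNIV_I e_refl top_le)
  fix a b
  have "e a y \<sqinter> e b y \<le> e y y \<sqinter> e a y \<sqinter> e b y" by (simp add: e_refl)
  also have "\<dots> \<le> (SUP z. e z y \<sqinter> e a z \<sqinter> e b z)" by (rule SUP_upper) simp
  finally show "e a y \<sqinter> e b y \<le> (SUP z. e z y \<sqinter> e a z \<sqinter> e b z)" .
  show "e a y \<sqinter> e b a \<le> e b y" using e_trans[of b a y] by (simp add: inf_commute)
qed

lemma isSupL_downL: "isSupL e (downL e y) y"
  unfolding isSupL_iff_le downL_def
proof (intro allI iffI)
  fix z c d
  assume "c \<le> e y z"
  hence "c \<sqinter> e d y \<le> e d y \<sqinter> e y z" by (simp add: le_infI1 le_infI2)
  also have "\<dots> \<le> e d z" by (rule e_trans)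
  finally show "c \<sqinter> e d y \<le> e d z" .
next
  fix z c
  assume "\<forall>d. c \<sqinter> e d y \<le> e d z"
  thus "c \<le> e y z" using e_refl[of y] by (metis inf_top.right_neutral)
qed

lemma wayBelowL_le: "wayBelowL e y x \<le> e x y"
proof -
  have "wayBelowL e y x \<sqinter> e y y \<le> downL e y x"
    by (rule wayBelowL_inf_le[OF idealL_downL isSupL_downL])
  thus ?thesis by (simp add: e_refl downL_def)
qed

lemma wayBelowL_upper: "wayBelowL e a x \<sqinter> e a b \<le> wayBelowL e b x"
proof (rule wayBelowL_greatest)
  fix I s assume I: "idealL e I" "isSupL e I s"
  have "wayBelowL e a x \<sqinter> e a b \<sqinter> e b s \<le> wayBelowL e a x \<sqinter> e a s"
    using e_trans[of a b s] by (simp add: inf_assoc le_infI2)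
  also have "\<dots> \<le> I x" by (rule wayBelowL_inf_le[OF I])
  finally show "wayBelowL e a x \<sqinter> e a b \<sqinter> e b s \<le> I x" .
qed

lemma upperL_wayAboveL: "upperL e (wayAboveL e x)"
  unfolding upperL_def wayAboveL_def using wayBelowL_upper by blast

lemma sigmaL_intro:
  assumes "upperL e A"
    and "\<And>D s. directedL e D \<Longrightarrow> isSupL e D s \<Longrightarrow> A s \<le> (SUP x. A x \<sqinter> D x)"
  shows "A \<in> sigmaL e"
  unfolding sigmaL_def
proof (intro CollectI conjI allI impI antisym)
  fix D s assume D: "directedL e D \<and> isSupL e D s"
  thus "A s \<le> (SUP x. A x \<sqinter> D x)" using assms(2) by blast
  show "(SUP x. A x \<sqinter> D x) \<le> A s"
  proof (rule SUP_least)
    fix x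
    have "A x \<sqinter> D x \<le> A x \<sqinter> e x s" using D isSupL_upper[of D s x] by (simp add: le_infI2)
    also have "\<dots> \<le> A s" using assms(1) unfolding upperL_def by blast
    finally show "A x \<sqinter> D x \<le> A s" .
  qed
qed (rule assms(1))

lemma wayAboveL_le_specUp: "wayAboveL e x y \<le> specUp UNIV (sigmaL e) x y"
proof (rule le_specUpI)
  fix C assume C: "C \<in> sigmaL e"
  have "wayAboveL e x y \<sqinter> C x \<le> C x \<sqinter> e x y"
    unfolding wayAboveL_def using wayBelowL_le[of y x] by (simp add: le_infI1)
  also have "\<dots> \<le> C y" by (rule sigmaL_upper[OF C])
  finally show "wayAboveL e x y \<sqinter> C x \<le> C y" .
qed simp

end

locale continuous_Lordered =
  fixes e :: "'a \<Rightarrow> 'a \<Rightarrow> 'l::frame"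
  assumes continuous: "continuousLOrd e"

sublocale continuous_Lordered \<subseteq> Lordered
  using continuous by unfold_locales (simp add: continuousLOrd_def)

context continuous_Lordered
begin

lemma directedL_wayBelowL: "directedL e (wayBelowL e x)"
  and isSupL_wayBelowL: "isSupL e (wayBelowL e x) x"
  using continuous unfolding continuousLOrd_def by blast+

lemma wayBelowL_common_bound:
  "wayBelowL e c a \<sqinter> wayBelowL e c b \<sqinter> D c \<le> (SUP z. wayBelowUnion e D z \<sqinter> e a z \<sqinter> e b z)"
  (is "_ \<le> ?R")
proof (rule directedL_inf_le[OF directedL_wayBelowL])
  fix z
  have "wayBelowL e c z \<sqinter> e a z \<sqinter> e b z \<sqinter> D c = (D c \<sqinter> wayBelowL e c z) \<sqinter> e a z \<sqinter> e b z"
    by (simp add: inf_aci)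
  also have "\<dots> \<le> wayBelowUnion e D z \<sqinter> e a z \<sqinter> e b z"
    using le_wayBelowUnion by (intro inf_mono) auto
  finally show "wayBelowL e c z \<sqinter> e a z \<sqinter> e b z \<sqinter> D c \<le> ?R"
    by (rule SUP_upper2[OF UNIV_I])
qed

lemma directedL_wayBelowUnion:
  assumes D: "directedL e D"
  shows "directedL e (wayBelowUnion e D)"
  unfolding directedL_def Lnonempty_def
proof (intro conjI allI)
  have "(SUP z. wayBelowUnion e D z) = (SUP d. SUP z. D d \<sqinter> wayBelowL e d z)"
    unfolding wayBelowUnion_def by (rule SUP_commute)
  also have "\<dots> = (SUP d. D d)"
    by (simp add: inf_SUP_frame[symmetric] directedL_SUP_top[OF directedL_wayBelowL])
  finally show "(SUP z\<in>UNIV. wayBelowUnion e D z) = top" using directedL_SUP_top[OF D] by simp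
next
  fix a b
  let ?R = "SUP z. wayBelowUnion e D z \<sqinter> e a z \<sqinter> e b z"
  have "D d \<sqinter> D d' \<sqinter> (wayBelowL e d a \<sqinter> wayBelowL e d' b) \<le> ?R" for d d'
  proof (rule directedL_inf_le[OF D])
    fix c
    let ?X = "D c \<sqinter> e d c \<sqinter> e d' c \<sqinter> (wayBelowL e d a \<sqinter> wayBelowL e d' b)"
    have "?X \<le> wayBelowL e c a"
      by (rule order_trans[OF _ wayBelowL_upper[of d a c]]) (simp add: le_infI1 le_infI2)
    moreover have "?X \<le> wayBelowL e c b"
      by (rule order_trans[OF _ wayBelowL_upper[of d' b c]]) (simp add: le_infI1 le_infI2)
    moreover have "?X \<le> D c" by (simp add: le_infI1)
    ultimately have "?X \<le> D c \<sqinter> wayBelowL e c a \<sqinter> wayBelowL e c b" by simp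
    also have "\<dots> \<le> ?R" using wayBelowL_common_bound[of c a b D] by (simp add: inf_aci)
    finally show "?X \<le> ?R" .
  qed
  hence "(SUP d. SUP d'. D d \<sqinter> wayBelowL e d a \<sqinter> (D d' \<sqinter> wayBelowL e d' b)) \<le> ?R"
    by (intro SUP_least) (simp add: inf_aci)
  thus "wayBelowUnion e D a \<sqinter> wayBelowUnion e D b \<le> ?R"
    unfolding wayBelowUnion_def by (simp only: SUP_inf_SUP_frame)
qed

lemma isSupL_wayBelowUnion:
  assumes D: "isSupL e D s"
  shows "isSupL e (wayBelowUnion e D) s"
  unfolding isSupL_iff_le
proof (intro allI iffI)
  fix y c z
  assume c: "c \<le> e s y"
  have "c \<sqinter> wayBelowUnion e D z = (SUP d. c \<sqinter> (D d \<sqinter> wayBelowL e d z))"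
    unfolding wayBelowUnion_def by (rule inf_SUP_frame)
  also have "\<dots> \<le> e z y"
  proof (rule SUP_least)
    fix d
    have "c \<sqinter> (D d \<sqinter> wayBelowL e d z) \<le> e z d \<sqinter> (e d s \<sqinter> e s y)"
      using c isSupL_upper[OF D, of d] wayBelowL_le[of d z] by (auto intro: le_infI1 le_infI2)
    also have "\<dots> \<le> e z y" using e_trans by (meson inf_mono order_refl order_trans)
    finally show "c \<sqinter> (D d \<sqinter> wayBelowL e d z) \<le> e z y" .
  qed
  finally show "c \<sqinter> wayBelowUnion e D z \<le> e z y" .
next
  fix y c
  assume c: "\<forall>z. c \<sqinter> wayBelowUnion e D z \<le> e z y"
  have "c \<sqinter> D d \<sqinter> wayBelowL e d z \<le> e z y" for d z
    using c le_wayBelowUnion[of D d e z] by (metis inf.assoc inf_mono order_refl order_trans)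
  hence "c \<sqinter> D d \<le> e d y" for d
    using isSupL_iff_le[of e "wayBelowL e d" d] isSupL_wayBelowL by blast
  thus "c \<le> e s y" using D unfolding isSupL_iff_le by blast
qed

lemma wayBelowL_interpolation:
  assumes "directedL e D" and "isSupL e D s"
  shows "wayBelowL e s x \<le> wayBelowUnion e D x"
proof -
  have "idealL e (wayBelowUnion e D)"
    unfolding idealL_def using assms(1) by (simp add: directedL_wayBelowUnion lowerL_wayBelowUnion)
  from wayBelowL_inf_le[OF this isSupL_wayBelowUnion[OF assms(2)], of s x]
  show ?thesis by (simp add: e_refl)
qed

lemma wayAboveL_sigmaL: "wayAboveL e x \<in> sigmaL e"
proof (rule sigmaL_intro[OF upperL_wayAboveL])
  fix D s assume "directedL e D" "isSupL e D s"
  from wayBelowL_interpolation[OF this, of x]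
  show "wayAboveL e x s \<le> (SUP y. wayAboveL e x y \<sqinter> D y)"
    by (simp add: wayAboveL_def wayBelowUnion_def inf_commute)
qed

lemma sigmaL_decomposition:
  assumes "A \<in> sigmaL e"
  shows "A = (SUP x. wayAboveL e x \<sqinter> constL UNIV (A x))"
proof
  fix y
  have "A y = (SUP x. A x \<sqinter> wayBelowL e y x)"
    using sigmaL_SUP[OF assms directedL_wayBelowL isSupL_wayBelowL] .
  thus "A y = (SUP x. wayAboveL e x \<sqinter> constL UNIV (A x)) y"
    by (simp add: wayAboveL_def constL_def inf_commute image_image)
qed

end

theorem proposition6p2:
  fixes e :: "'a \<Rightarrow> 'a \<Rightarrow> 'l::frame"
  assumes "continuousLOrd e"
  shows "Ltopology (ptL UNIV (sigmaL e)) (spectralTop UNIV (sigmaL e))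
       \<and> locallySuperCompact (ptL UNIV (sigmaL e)) (spectralTop UNIV (sigmaL e))
       \<and> Lsober (ptL UNIV (sigmaL e)) (spectralTop UNIV (sigmaL e))"
proof -
  interpret continuous_Lordered e by unfold_locales (rule assms)
  have "locallySuperCompact (ptL UNIV (sigmaL e)) (spectralTop UNIV (sigmaL e))"
    using locallySuperCompact_spectrum[OF Ltopology_sigmaL wayAboveL_sigmaL wayAboveL_le_specUp
        sigmaL_decomposition] by simp
  thus ?thesis using Ltopology_spectrum Lsober_spectrum Ltopology_sigmaL by blast
qed

end
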